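(* Let $R_1,R_2$ be commutative rings with nonzero identity, $I_1$ an ideal of $R_1$, $I_2$ an ideal of $R_2$, $R=R_1\times R_2$ and $I=I_1\times I_2$. If $(x_1,y_1),(x_2,y_2)\in V(\Gamma''_{I_1}(R_1))\times V(\Gamma''_{I_2}(R_2))$ are not adjacent in $\Gamma''_I(R)$, then $x_1$ is not adjacent to $x_2$ in $\Gamma''_{I_1}(R_1)$ and $y_1$ is not adjacent to $y_2$ in $\Gamma''_{I_2}(R_2)$.
   Context: $R_1\times R_2$ has componentwise operations; $V(G)$ denotes the vertex set of a graph $G$. For a commutative ring $S$ and an ideal $J$ of $S$, $\Gamma''_J(S)$ is the simple undirected graph whose vertex set is $\{x\in S\setminus J : xS+J\neq S\}$, with distinct vertices $x,y$ adjacent if and only if $x\notin yS+J$ and $y\notin xS+J$. *)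

theory Defs
  imports "HOL-Algebra.Algebra"
begin

definition elt_ideal_sum :: "('a, 'm) ring_scheme \<Rightarrow> 'a \<Rightarrow> 'a set \<Rightarrow> 'a set" where
  "elt_ideal_sum S x J = {x \<otimes>\<^bsub>S\<^esub> s \<oplus>\<^bsub>S\<^esub> j | s j. s \<in> carrier S \<and> j \<in> J}"

definition g2_verts :: "('a, 'm) ring_scheme \<Rightarrow> 'a set \<Rightarrow> 'a set" where
  "g2_verts S J = {x \<in> carrier S - J. elt_ideal_sum S x J \<noteq> carrier S}"

definition g2_adj :: "('a, 'm) ring_scheme \<Rightarrow> 'a set \<Rightarrow> 'a \<Rightarrow> 'a \<Rightarrow> bool" where
  "g2_adj S J x y \<longleftrightarrow> x \<in> g2_verts S J \<and> y \<in> g2_verts S J \<and> x \<noteq> y \<and>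
     x \<notin> elt_ideal_sum S y J \<and> y \<notin> elt_ideal_sum S x J"

end

theory Submission
  imports Defs
begin

text \<open>In \<open>R\<^sub>1 \<times> R\<^sub>2\<close> the set \<open>(x, y) R + I\<^sub>1 \<times> I\<^sub>2\<close> is \<open>(x R\<^sub>1 + I\<^sub>1) \<times> (y R\<^sub>2 + I\<^sub>2)\<close>,
  so a pair lies in it iff both coordinates lie in the corresponding sets. Hence if \<open>x\<^sub>1\<close> and
  \<open>x\<^sub>2\<close> are adjacent, neither of \<open>(x\<^sub>1, y\<^sub>1)\<close>, \<open>(x\<^sub>2, y\<^sub>2)\<close> lies in the set of the other,
  whatever \<open>y\<^sub>1, y\<^sub>2\<close> are, and the two pairs are adjacent; likewise for the second coordinate.
  No ring axioms are needed.\<close>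

lemma RDirProd_mult_Pair:
  "(a, b) \<otimes>\<^bsub>RDirProd R S\<^esub> (c, d) = (a \<otimes>\<^bsub>R\<^esub> c, b \<otimes>\<^bsub>S\<^esub> d)"
  by (simp add: RDirProd_def DirProd_def monoid.defs)

lemma RDirProd_add_Pair:
  "(a, b) \<oplus>\<^bsub>RDirProd R S\<^esub> (c, d) = (a \<oplus>\<^bsub>R\<^esub> c, b \<oplus>\<^bsub>S\<^esub> d)"
  by (simp add: RDirProd_def DirProd_def monoid.defs)

lemma elt_ideal_sum_RDirProd:
  "elt_ideal_sum (RDirProd R S) (x, y) (I \<times> J) = elt_ideal_sum R x I \<times> elt_ideal_sum S y J"
  unfolding elt_ideal_sum_def RDirProd_carrier
  by (auto simp: RDirProd_mult_Pair RDirProd_add_Pair)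

lemma elt_ideal_sum_RDirProd_neq_carrier:
  assumes "elt_ideal_sum R x I \<noteq> carrier R \<or> elt_ideal_sum S y J \<noteq> carrier S"
    and "x \<in> carrier R" and "y \<in> carrier S"
  shows "elt_ideal_sum (RDirProd R S) (x, y) (I \<times> J) \<noteq> carrier (RDirProd R S)"
  using assms unfolding elt_ideal_sum_RDirProd RDirProd_carrier
  by (metis empty_iff times_eq_iff)

lemma g2_verts_RDirProd_fst:
  assumes "x \<in> g2_verts R I" and "y \<in> carrier S"
  shows "(x, y) \<in> g2_verts (RDirProd R S) (I \<times> J)"
  using assms elt_ideal_sum_RDirProd_neq_carrier[of R x I S y J]
  by (simp add: g2_verts_def RDirProd_carrier)

lemma g2_verts_RDirProd_snd:
  assumes "x \<in> carrier R" and "y \<in> g2_verts S J"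
  shows "(x, y) \<in> g2_verts (RDirProd R S) (I \<times> J)"
  using assms elt_ideal_sum_RDirProd_neq_carrier[of R x I S y J]
  by (simp add: g2_verts_def RDirProd_carrier)

lemma g2_adj_RDirProd_fst:
  assumes "g2_adj R I x1 x2" and "y1 \<in> carrier S" and "y2 \<in> carrier S"
  shows "g2_adj (RDirProd R S) (I \<times> J) (x1, y1) (x2, y2)"
  using assms g2_verts_RDirProd_fst[of x1 R I y1 S J] g2_verts_RDirProd_fst[of x2 R I y2 S J]
  by (simp add: g2_adj_def elt_ideal_sum_RDirProd)

lemma g2_adj_RDirProd_snd:
  assumes "g2_adj S J y1 y2" and "x1 \<in> carrier R" and "x2 \<in> carrier R"
  shows "g2_adj (RDirProd R S) (I \<times> J) (x1, y1) (x2, y2)"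
  using assms g2_verts_RDirProd_snd[of x1 R y1 S J I] g2_verts_RDirProd_snd[of x2 R y2 S J I]
  by (simp add: g2_adj_def elt_ideal_sum_RDirProd)

theorem corollary2p2:
  fixes R1 :: "('a, 'm) ring_scheme" and R2 :: "('b, 'n) ring_scheme"
  assumes "cring R1" and "cring R2"
    and "\<one>\<^bsub>R1\<^esub> \<noteq> \<zero>\<^bsub>R1\<^esub>" and "\<one>\<^bsub>R2\<^esub> \<noteq> \<zero>\<^bsub>R2\<^esub>"
    and "ideal I1 R1" and "ideal I2 R2"
    and "x1 \<in> g2_verts R1 I1" and "x2 \<in> g2_verts R1 I1"
    and "y1 \<in> g2_verts R2 I2" and "y2 \<in> g2_verts R2 I2"
    and "\<not> g2_adj (RDirProd R1 R2) (I1 \<times> I2) (x1, y1) (x2, y2)"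
  shows "\<not> g2_adj R1 I1 x1 x2 \<and> \<not> g2_adj R2 I2 y1 y2"
proof -
  have x: "x1 \<in> carrier R1" "x2 \<in> carrier R1" and y: "y1 \<in> carrier R2" "y2 \<in> carrier R2"
    using assms(7-10) by (simp_all add: g2_verts_def)
  show ?thesis
    using g2_adj_RDirProd_fst[OF _ y, of R1 I1 x1 x2 I2] g2_adj_RDirProd_snd[OF _ x, of R2 I2 y1 y2 I1]
      assms(11) by blast
qed

end
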